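(* Let $S$ be $\mathbb{R}$ or $\mathbb{C}$, and let $\boldsymbol{\varepsilon}=(\varepsilon_1,\dots,\varepsilon_{n-1})$, $\boldsymbol{\delta}=(\delta_1,\dots,\delta_{n-1})$ satisfy $-1<\delta_i\le0\le\varepsilon_i$ for $i=1,\dots,n-1$. Then for every $A\in\mathbf{CP}^{\boldsymbol{\varepsilon}}_n(S)$ there exists $B\in\mathbf{CP}^{\boldsymbol{\delta}}_n(S)$ such that $b^{(k)}_{n,n}=a^{(k)}_{n,n}$ for all $k=1,\dots,n$, and for all $k$ and all $i,j\ge k$, $$\big|b^{(k)}_{i,j}-a^{(k)}_{i,j}\big|\le \max_{\min\{i,j\}\le \ell\le n-1}\left( \frac{\Big[\big(\frac{1+\varepsilon_\ell}{1+\delta_\ell}\big)^2-1\Big]\,|a^{(\ell)}_{\ell,\ell}|}{\prod_{p=\min\{i,j\}}^{\ell-1}(1+\delta_p)} + \sum_{m=\min\{i,j\}}^{\ell-1}\frac{(\varepsilon_m-\delta_m)\,|a^{(m)}_{m,m}|}{\prod_{p=\min\{i,j\}}^{m}(1+\delta_p)}\right).$$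
   Context: For an $n\times n$ complex matrix $A=(a_{i,j})$, Gaussian elimination without pivoting is the recursion $a^{(1)}_{i,j}=a_{i,j}$ and $a^{(k+1)}_{i,j}=a^{(k)}_{i,j}-a^{(k)}_{i,k}a^{(k)}_{k,j}/a^{(k)}_{k,k}$ for $k+1\le i,j\le n$, $k=1,\dots,n-1$ (defined when all pivots $a^{(k)}_{k,k}\ne0$); similarly $b^{(k)}_{i,j}$ for $B$. For $S\subseteq\mathbb{C}$ and $\boldsymbol{\varepsilon}=(\varepsilon_1,\dots,\varepsilon_{n-1})$ with each $\varepsilon_i>-1$, $\mathbf{CP}^{\boldsymbol{\varepsilon}}_n(S)$ is the set of invertible $A\in S^{n\times n}$ for which elimination without pivoting is defined and $|a^{(k)}_{i,j}|\le(1+\varepsilon_k)|a^{(k)}_{k,k}|$ for all $k=1,\dots,n-1$ and all $i,j\ge k$ with $(i,j)\ne(k,k)$. Empty products equal $1$ and empty sums equal $0$. *)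

theory Defs
  imports Complex_Main
begin

text \<open>Matrices are functions nat => nat => complex, indexed 1..n.
  ge A k i j is the entry a^(k)_{i,j} of Gaussian elimination without pivoting
  (k starts at 1; ge A 1 = A).\<close>

fun ge :: "(nat \<Rightarrow> nat \<Rightarrow> complex) \<Rightarrow> nat \<Rightarrow> nat \<Rightarrow> nat \<Rightarrow> complex" where
  "ge A 0 i j = A i j"
| "ge A (Suc 0) i j = A i j"
| "ge A (Suc (Suc k)) i j =
     ge A (Suc k) i j - ge A (Suc k) i (Suc k) * ge A (Suc k) (Suc k) j / ge A (Suc k) (Suc k) (Suc k)"

definition invertible_n :: "nat \<Rightarrow> (nat \<Rightarrow> nat \<Rightarrow> complex) \<Rightarrow> bool" where
  "invertible_n n A \<longleftrightarrow> (\<exists>B. \<forall>i\<in>{1..n}. \<forall>j\<in>{1..n}.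
      (\<Sum>l=1..n. A i l * B l j) = (if i = j then 1 else 0))"

definition CP :: "(nat \<Rightarrow> real) \<Rightarrow> nat \<Rightarrow> complex set \<Rightarrow> (nat \<Rightarrow> nat \<Rightarrow> complex) \<Rightarrow> bool" where
  "CP eps n S A \<longleftrightarrow>
     (\<forall>i\<in>{1..n}. \<forall>j\<in>{1..n}. A i j \<in> S) \<and>
     invertible_n n A \<and>
     (\<forall>k\<in>{1..n-1}. ge A k k k \<noteq> 0) \<and>
     (\<forall>k\<in>{1..n-1}. \<forall>i\<in>{k..n}. \<forall>j\<in>{k..n}. (i, j) \<noteq> (k, k) \<longrightarrow>
        cmod (ge A k i j) \<le> (1 + eps k) * cmod (ge A k k k))"

text \<open>The bound of the theorem; the max over an empty range (only when min i j = n) is taken as 0.\<close>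
definition bnd :: "(nat \<Rightarrow> real) \<Rightarrow> (nat \<Rightarrow> real) \<Rightarrow> nat \<Rightarrow> (nat \<Rightarrow> nat \<Rightarrow> complex) \<Rightarrow> nat \<Rightarrow> nat \<Rightarrow> real" where
  "bnd eps del n A i j =
     (let r = min i j in
      if {r..n-1} = {} then 0 else
      Max ((\<lambda>l. (((1 + eps l) / (1 + del l))^2 - 1) * cmod (ge A l l l)
                   / (\<Prod>p=r..<l. 1 + del p)
               + (\<Sum>m=r..<l. (eps m - del m) * cmod (ge A m m m) / (\<Prod>p=r..m. 1 + del p)))
           ` {r..n-1}))"

end

theory Submission
  imports Defs "Jordan_Normal_Form.Determinant"
begin

text \<open>B is obtained from A by multiplying, at every stage r < n of the elimination, the off-diagonal
  entries of row and column r of the r-th Schur complement by a factor s r \<ge> 1, and hence its pivot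
  by (s r)^2. These rescalings commute with elimination, so each stage of B differs from the same
  stage of A only in the rescaled entries. The pivot row and column of B meet the del-bound once
  s r \<ge> (1 + eps r) / (1 + del r); the remaining entries meet it once the growth
  D r = ((s r)^2 - 1) |a_rr| of the pivot absorbs (eps r - del r) |a_rr| together with the
  perturbations D (r + 1) caused by the later stages. Taking D r minimal under both constraints,
  backwards from r = n - 1, and unrolling the recursion gives the stated bound.\<close>

lemma ge_Suc:
  "1 \<le> k \<Longrightarrow> ge A (Suc k) i j = ge A k i j - ge A k i k * ge A k k j / ge A k k k"
  by (cases k) auto

lemma ge_telescope:
  "A i j = (\<Sum>t<k. ge A (Suc t) i (Suc t) * ge A (Suc t) (Suc t) j / ge A (Suc t) (Suc t) (Suc t))
           + ge A (Suc k) i j"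
  by (induction k) (simp_all add: ge_Suc)

lemma ge_Reals:
  assumes "\<forall>i\<in>{1..n}. \<forall>j\<in>{1..n}. A i j \<in> \<real>"
  shows "k \<le> n \<Longrightarrow> i \<in> {1..n} \<Longrightarrow> j \<in> {1..n} \<Longrightarrow> ge A k i j \<in> \<real>"
proof (induction k arbitrary: i j)
  case 0
  then show ?case using assms by simp
next
  case (Suc k)
  show ?case
  proof (cases "k = 0")
    case True
    then show ?thesis using assms Suc.prems by simp
  next
    case False
    then have "k \<in> {1..n}" using Suc.prems by auto
    then show ?thesis
      using Suc False by (simp add: ge_Suc Reals_diff Reals_mult Reals_divide)
  qed
qed

section \<open>Triangular factorization and invertibility\<close>

definition mat_of :: "nat \<Rightarrow> (nat \<Rightarrow> nat \<Rightarrow> complex) \<Rightarrow> complex mat" where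
  "mat_of n A = mat n n (\<lambda>(i, j). A (Suc i) (Suc j))"

definition lower_factor :: "nat \<Rightarrow> (nat \<Rightarrow> nat \<Rightarrow> complex) \<Rightarrow> complex mat" where
  "lower_factor n A = mat n n (\<lambda>(i, j).
     if j < i then ge A (Suc j) (Suc i) (Suc j) / ge A (Suc j) (Suc j) (Suc j)
     else if i = j then 1 else 0)"

definition upper_factor :: "nat \<Rightarrow> (nat \<Rightarrow> nat \<Rightarrow> complex) \<Rightarrow> complex mat" where
  "upper_factor n A = mat n n (\<lambda>(i, j). if i \<le> j then ge A (Suc i) (Suc i) (Suc j) else 0)"

lemma mat_of_eq_LU:
  assumes pivots: "\<forall>k\<in>{1..n-1}. ge A k k k \<noteq> 0"
  shows "mat_of n A = lower_factor n A * upper_factor n A"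
proof (rule eq_matI)
  fix i j assume "i < dim_row (lower_factor n A * upper_factor n A)"
    and "j < dim_col (lower_factor n A * upper_factor n A)"
  then have i: "i < n" and j: "j < n" by (auto simp: lower_factor_def upper_factor_def)
  define r where "r = min i j"
  define f where "f t = lower_factor n A $$ (i, t) * upper_factor n A $$ (t, j)" for t
  have "(lower_factor n A * upper_factor n A) $$ (i, j) = (\<Sum>t<n. f t)"
    using i j by (simp add: lower_factor_def upper_factor_def scalar_prod_def f_def atLeast0LessThan)
  also have "\<dots> = (\<Sum>t<Suc r. f t)"
    by (rule sum.mono_neutral_right) (use i j in \<open>auto simp: r_def f_def lower_factor_def upper_factor_def\<close>)
  also have "\<dots> = (\<Sum>t<r. ge A (Suc t) (Suc i) (Suc t) * ge A (Suc t) (Suc t) (Suc j)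
                          / ge A (Suc t) (Suc t) (Suc t)) + ge A (Suc r) (Suc i) (Suc j)"
  proof -
    have "f r = ge A (Suc r) (Suc i) (Suc j)"
    proof (cases "i \<le> j")
      case False
      then have "ge A (Suc j) (Suc j) (Suc j) \<noteq> 0" using pivots i by auto
      then show ?thesis using i j False by (simp add: r_def f_def lower_factor_def upper_factor_def)
    qed (use i j in \<open>simp add: r_def f_def lower_factor_def upper_factor_def\<close>)
    moreover have "f t = ge A (Suc t) (Suc i) (Suc t) * ge A (Suc t) (Suc t) (Suc j)
                          / ge A (Suc t) (Suc t) (Suc t)" if "t < r" for t
      using that i j by (simp add: r_def f_def lower_factor_def upper_factor_def)
    ultimately show ?thesis by simp
  qed
  also have "\<dots> = mat_of n A $$ (i, j)"
    using i j by (simp add: mat_of_def flip: ge_telescope)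
  finally show "mat_of n A $$ (i, j) = (lower_factor n A * upper_factor n A) $$ (i, j)" ..
qed (simp_all add: mat_of_def lower_factor_def upper_factor_def)

lemma det_mat_of_eq_prod_pivots:
  assumes "\<forall>k\<in>{1..n-1}. ge A k k k \<noteq> 0"
  shows "det (mat_of n A) = (\<Prod>k=1..n. ge A k k k)"
proof -
  have L: "lower_factor n A \<in> carrier_mat n n" and U: "upper_factor n A \<in> carrier_mat n n"
    by (simp_all add: lower_factor_def upper_factor_def)
  have "det (lower_factor n A) = 1"
    by (subst det_lower_triangular[OF _ L]) (auto simp: lower_factor_def prod_list_diag_prod)
  moreover have "det (upper_factor n A) = (\<Prod>k=1..n. ge A k k k)"
    by (subst det_upper_triangular[OF _ U])
      (auto simp: upper_factor_def prod_list_diag_prod atLeast0LessThan prod.atLeast1_atMost_eq)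
  ultimately show ?thesis
    using mat_of_eq_LU[OF assms] det_mult[OF L U] by simp
qed

lemma mat_of_mult_index:
  "i < n \<Longrightarrow> j < n \<Longrightarrow> (mat_of n A * mat_of n B) $$ (i, j) = (\<Sum>l=1..n. A (Suc i) l * B l (Suc j))"
  by (simp add: mat_of_def scalar_prod_def atLeast0LessThan sum.atLeast1_atMost_eq)

lemma invertible_n_iff_right_inverse:
  "invertible_n n A \<longleftrightarrow> (\<exists>B. mat_of n A * mat_of n B = 1\<^sub>m n)"
proof -
  have "M = 1\<^sub>m n \<longleftrightarrow> (\<forall>i<n. \<forall>j<n. M $$ (i, j) = (if i = j then 1 else 0))"
    if "M \<in> carrier_mat n n" for M :: "complex mat"
    using that by (auto intro!: eq_matI)
  moreover have "mat_of n A * mat_of n B \<in> carrier_mat n n" for B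
    unfolding mat_of_def by (rule mult_carrier_mat) auto
  ultimately have "mat_of n A * mat_of n B = 1\<^sub>m n \<longleftrightarrow>
      (\<forall>i<n. \<forall>j<n. (\<Sum>l=1..n. A (Suc i) l * B l (Suc j)) = (if i = j then 1 else 0))" for B
    by (simp add: mat_of_mult_index)
  then show ?thesis
    unfolding invertible_n_def image_Suc_lessThan[symmetric] by (simp add: lessThan_def)
qed

lemma invertible_n_iff_det: "invertible_n n A \<longleftrightarrow> det (mat_of n A) \<noteq> 0"
proof
  assume "invertible_n n A"
  then obtain B where "mat_of n A * mat_of n B = 1\<^sub>m n"
    using invertible_n_iff_right_inverse by blast
  then have "det (mat_of n A) * det (mat_of n B) = 1"
    using det_mult[of "mat_of n A" n "mat_of n B"] by (simp add: mat_of_def)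
  then show "det (mat_of n A) \<noteq> 0" by auto
next
  assume "det (mat_of n A) \<noteq> 0"
  then obtain X where X: "X \<in> carrier_mat n n" "mat_of n A * X = 1\<^sub>m n"
    using det_non_zero_imp_unit[of "mat_of n A" n] by (auto simp: mat_of_def Units_def ring_mat_def)
  moreover have "mat_of n (\<lambda>i j. X $$ (i - 1, j - 1)) = X"
    using X(1) by (auto simp: mat_of_def intro!: eq_matI)
  ultimately show "invertible_n n A"
    using invertible_n_iff_right_inverse by metis
qed

lemma invertible_n_iff_pivots:
  assumes "\<forall>k\<in>{1..n-1}. ge A k k k \<noteq> 0"
  shows "invertible_n n A \<longleftrightarrow> (\<Prod>k=1..n. ge A k k k) \<noteq> 0"
  using invertible_n_iff_det det_mat_of_eq_prod_pivots[OF assms] by simp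

section \<open>Rescaling the pivot rows and columns\<close>

definition pivot_weight :: "(nat \<Rightarrow> real) \<Rightarrow> nat \<Rightarrow> nat \<Rightarrow> nat \<Rightarrow> real" where
  "pivot_weight s r i j = (if i = r then s r else 1) * (if j = r then s r else 1)"

text \<open>Entry (i, j) belongs to the pivot row or column of stage r = min i j. It is changed so that its
  stage-r value becomes s r times that of A, or (s r)^2 times at the pivot; see ge_rescale_pivots.\<close>
definition rescale_pivots ::
    "(nat \<Rightarrow> nat \<Rightarrow> complex) \<Rightarrow> (nat \<Rightarrow> real) \<Rightarrow> nat \<Rightarrow> nat \<Rightarrow> complex" where
  "rescale_pivots A s i j = A i j + of_real (pivot_weight s (min i j) i j - 1) * ge A (min i j) i j"

lemma ge_rescale_pivots:
  assumes s: "\<And>m. s m \<noteq> 0" and "1 \<le> k"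
  shows "k \<le> i \<Longrightarrow> k \<le> j \<Longrightarrow> ge (rescale_pivots A s) k i j
           = ge A k i j + of_real (pivot_weight s (min i j) i j - 1) * ge A (min i j) i j"
  using \<open>1 \<le> k\<close>
proof (induction k arbitrary: i j rule: nat_induct_at_least)
  case base
  then show ?case by (simp add: rescale_pivots_def)
next
  case (Suc k)
  let ?B = "rescale_pivots A s"
  have ik: "ge ?B k i k = of_real (s k) * ge A k i k"
    and kj: "ge ?B k k j = of_real (s k) * ge A k k j"
    and kk: "ge ?B k k k = of_real (s k) * of_real (s k) * ge A k k k"
    using Suc.IH[of i k] Suc.IH[of k j] Suc.IH[of k k] Suc.prems
    by (simp_all add: pivot_weight_def algebra_simps)
  have "ge ?B k i k * ge ?B k k j / ge ?B k k k = ge A k i k * ge A k k j / ge A k k k"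
    unfolding ik kj kk using s[of k] by (cases "ge A k k k = 0") (simp_all add: field_simps)
  then show ?case
    using Suc.IH[of i j] Suc.prems Suc.hyps by (simp add: ge_Suc)
qed

lemma rescale_pivots_Reals:
  assumes "\<forall>i\<in>{1..n}. \<forall>j\<in>{1..n}. A i j \<in> \<real>" and "i \<in> {1..n}" "j \<in> {1..n}"
  shows "rescale_pivots A s i j \<in> \<real>"
proof -
  have "ge A (min i j) i j \<in> \<real>"
    using ge_Reals[OF assms(1)] assms(2,3) by auto
  then show ?thesis
    using assms unfolding rescale_pivots_def
    by (auto simp del: of_real_diff intro!: Reals_add Reals_mult)
qed

section \<open>Choice of the scaling factors\<close>

text \<open>The quantity D r of the proof idea: the least solution of defect_ge_ratio and defect_ge_step,
  with a k standing for the pivot modulus |a_kk|.\<close>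
function defect :: "(nat \<Rightarrow> real) \<Rightarrow> (nat \<Rightarrow> real) \<Rightarrow> (nat \<Rightarrow> real) \<Rightarrow> nat \<Rightarrow> nat \<Rightarrow> real" where
  "defect eps del a n k =
     (if n \<le> k then 0
      else max ((((1 + eps k) / (1 + del k))^2 - 1) * a k)
               (((eps k - del k) * a k + defect eps del a n (Suc k)) / (1 + del k)))"
  by auto
termination by (relation "measure (\<lambda>(eps, del, a, n, k). n - k)") auto

declare defect.simps [simp del]

definition pivot_scale :: "(nat \<Rightarrow> real) \<Rightarrow> (nat \<Rightarrow> real) \<Rightarrow> (nat \<Rightarrow> real) \<Rightarrow> nat \<Rightarrow> nat \<Rightarrow> real" where
  "pivot_scale eps del a n k = (if k \<in> {1..n-1} then sqrt (1 + defect eps del a n k / a k) else 1)"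

definition bnd_term :: "(nat \<Rightarrow> real) \<Rightarrow> (nat \<Rightarrow> real) \<Rightarrow> (nat \<Rightarrow> real) \<Rightarrow> nat \<Rightarrow> nat \<Rightarrow> real" where
  "bnd_term eps del a r l =
     (((1 + eps l) / (1 + del l))^2 - 1) * a l / (\<Prod>p=r..<l. 1 + del p)
     + (\<Sum>m=r..<l. (eps m - del m) * a m / (\<Prod>p=r..m. 1 + del p))"

lemma bnd_eq_Max_bnd_term:
  "bnd eps del n A i j =
     (if {min i j..n-1} = {} then 0
      else Max (bnd_term eps del (\<lambda>k. cmod (ge A k k k)) (min i j) ` {min i j..n-1}))"
  unfolding bnd_def bnd_term_def Let_def by simp

lemma bnd_term_step:
  assumes "r < l"
  shows "bnd_term eps del a r l = ((eps r - del r) * a r + bnd_term eps del a (Suc r) l) / (1 + del r)"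
proof -
  have prod: "(\<Prod>p=r..<l. 1 + del p) = (\<Prod>p=Suc r..<l. 1 + del p) * (1 + del r)"
    using assms by (simp add: prod.atLeast_Suc_lessThan)
  have sum: "(\<Sum>m=Suc r..<l. (eps m - del m) * a m / (\<Prod>p=r..m. 1 + del p))
      = (\<Sum>m=Suc r..<l. (eps m - del m) * a m / (\<Prod>p=Suc r..m. 1 + del p)) / (1 + del r)"
    unfolding sum_divide_distrib
    by (rule sum.cong) (simp_all add: prod.atLeast_Suc_atMost divide_divide_eq_left mult.commute)
  show ?thesis
    unfolding bnd_term_def sum.atLeast_Suc_lessThan[OF assms] prod sum
    by (simp add: add_divide_distrib divide_divide_eq_left)
qed

locale scaling_params =
  fixes n :: nat and eps del a :: "nat \<Rightarrow> real"
  assumes params: "\<forall>k\<in>{1..n-1}. -1 < del k \<and> del k \<le> 0 \<and> 0 \<le> eps k"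
    and pivots_pos: "\<forall>k\<in>{1..n-1}. 0 < a k"
begin

abbreviation "D \<equiv> defect eps del a n"
abbreviation "s \<equiv> pivot_scale eps del a n"
abbreviation "ratio k \<equiv> (1 + eps k) / (1 + del k)"

lemma params_at:
  assumes "1 \<le> k" "k < n"
  shows "0 < 1 + del k" "del k \<le> 0" "0 \<le> eps k" "0 < a k"
proof -
  have "k \<in> {1..n-1}" using assms by auto
  then show "0 < 1 + del k" "del k \<le> 0" "0 \<le> eps k" "0 < a k"
    using params pivots_pos by fastforce+
qed

lemma defect_beyond: "n \<le> k \<Longrightarrow> D k = 0"
  by (simp add: defect.simps)

lemma defect_step:
  "k < n \<Longrightarrow> D k = max ((ratio k ^ 2 - 1) * a k) (((eps k - del k) * a k + D (Suc k)) / (1 + del k))"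
  by (subst defect.simps) simp

lemma defect_ge_ratio: "k < n \<Longrightarrow> (ratio k ^ 2 - 1) * a k \<le> D k"
  by (simp add: defect_step)

lemma defect_ge_step:
  assumes "1 \<le> k" "k < n"
  shows "(eps k - del k) * a k + D (Suc k) \<le> (1 + del k) * D k"
proof -
  have "((eps k - del k) * a k + D (Suc k)) / (1 + del k) \<le> D k"
    by (simp add: defect_step[OF assms(2)])
  then show ?thesis
    using params_at[OF assms] by (simp add: pos_divide_le_eq mult.commute)
qed

lemma ratio_ge:
  assumes "1 \<le> k" "k < n"
  shows "1 + eps k \<le> ratio k"
  using params_at[OF assms] by (simp add: le_divide_eq mult_left_le)

lemma one_le_ratio: "1 \<le> k \<Longrightarrow> k < n \<Longrightarrow> 1 \<le> ratio k"
  using ratio_ge params_at by force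

lemma defect_nonneg:
  assumes "1 \<le> k"
  shows "0 \<le> D k"
proof (cases "k < n")
  case True
  have "0 \<le> (ratio k ^ 2 - 1) * a k"
    using one_le_ratio[OF assms True] params_at[OF assms True] by (simp add: one_le_power)
  then show ?thesis using defect_ge_ratio[OF True] by linarith
qed (simp add: defect_beyond)

lemma defect_Suc_le:
  assumes "1 \<le> k"
  shows "D (Suc k) \<le> D k"
proof (cases "k < n")
  case True
  note h = params_at[OF assms True]
  have "D (Suc k) \<le> (eps k - del k) * a k + D (Suc k)"
    using h by simp
  also have "\<dots> \<le> (1 + del k) * D k"
    using defect_ge_step[OF assms True] .
  also have "\<dots> \<le> D k"
    using h defect_nonneg[OF assms] by (simp add: mult_left_le_one_le)
  finally show ?thesis .
qed (simp add: defect_beyond)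

lemma defect_antimono:
  assumes "1 \<le> k" "k \<le> r"
  shows "D r \<le> D k"
  using assms(2)
proof (induction r rule: dec_induct)
  case (step r)
  then show ?case using defect_Suc_le[of r] assms(1) by simp
qed simp

lemma pivot_scale_pos: "0 < s k"
proof (cases "k \<in> {1..n-1}")
  case True
  then have "1 \<le> k" "k < n" by auto
  then have "0 \<le> D k / a k"
    using defect_nonneg[of k] params_at(4)[of k] by simp
  then show ?thesis using True by (simp add: pivot_scale_def)
qed (auto simp: pivot_scale_def)

lemma pivot_scale_last: "s n = 1"
  by (simp add: pivot_scale_def defect_beyond)

lemma pivot_scale_sq:
  assumes "1 \<le> k" "k < n"
  shows "(s k ^ 2 - 1) * a k = D k"
  using assms defect_nonneg[OF assms(1)] params_at[OF assms] by (simp add: pivot_scale_def field_simps)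

lemma ratio_le_pivot_scale:
  assumes "1 \<le> k" "k < n"
  shows "ratio k \<le> s k"
proof (rule power2_le_imp_le)
  have "(ratio k ^ 2 - 1) * a k \<le> (s k ^ 2 - 1) * a k"
    using pivot_scale_sq[OF assms] defect_ge_ratio[OF assms(2)] by simp
  then show "ratio k ^ 2 \<le> s k ^ 2"
    using params_at[OF assms] by simp
qed (use pivot_scale_pos in \<open>simp add: less_imp_le\<close>)

lemma one_le_pivot_scale: "1 \<le> s k"
proof (cases "k \<in> {1..n-1}")
  case True
  then show ?thesis using ratio_le_pivot_scale one_le_ratio by force
qed (auto simp: pivot_scale_def)

lemma pivot_scale_row_bound:
  assumes "1 \<le> k" "k < n"
  shows "1 + eps k \<le> (1 + del k) * s k"
  using ratio_le_pivot_scale[OF assms] params_at[OF assms] by (simp add: divide_le_eq mult.commute)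

lemma pivot_scale_inner_bound:
  assumes "1 \<le> k" "k < n"
  shows "(1 + eps k) * a k + D (Suc k) \<le> (1 + del k) * (s k ^ 2 * a k)"
proof -
  have "s k ^ 2 * a k = a k + D k"
    using pivot_scale_sq[OF assms] by (simp add: algebra_simps)
  moreover note defect_ge_step[OF assms]
  ultimately show ?thesis by (simp add: algebra_simps)
qed

lemma pivot_scale_offdiag:
  assumes "1 \<le> k" "k < n" and "z \<le> (1 + eps k) * a k"
  shows "(s k - 1) * z \<le> D k"
proof -
  have "(s k - 1) * z \<le> (s k - 1) * ((1 + eps k) * a k)"
    using assms(3) one_le_pivot_scale[of k] by (simp add: mult_left_mono)
  also have "\<dots> \<le> (s k - 1) * ((s k + 1) * a k)"
    using ratio_le_pivot_scale[OF assms(1,2)] ratio_ge[OF assms(1,2)] one_le_pivot_scale[of k]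
      params_at[OF assms(1,2)]
    by (intro mult_left_mono mult_right_mono) auto
  also have "\<dots> = D k"
    using pivot_scale_sq[OF assms(1,2)] by (simp add: power2_eq_square algebra_simps)
  finally show ?thesis .
qed

lemma defect_le_bnd_term:
  assumes "1 \<le> r" "r < n"
  shows "\<exists>l\<in>{r..n-1}. D r \<le> bnd_term eps del a r l"
proof -
  have "r \<le> n - 1" using assms by simp
  then show ?thesis
  proof (induction r rule: inc_induct)
    case base
    have r: "1 \<le> n - 1" "n - 1 < n" using assms by auto
    note h = params_at[OF r]
    have "(eps (n-1) - del (n-1)) * a (n-1) / (1 + del (n-1)) = (ratio (n-1) - 1) * a (n-1)"
      using h by (simp add: field_simps)
    also have "\<dots> \<le> (ratio (n-1) ^ 2 - 1) * a (n-1)"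
    proof (intro mult_right_mono)
      have "x - 1 \<le> x ^ 2 - 1" if "1 \<le> x" for x :: real
        using mult_left_mono[OF that, of x] that by (simp add: power2_eq_square)
      then show "ratio (n-1) - 1 \<le> ratio (n-1) ^ 2 - 1" using one_le_ratio[OF r] .
    qed (use h in simp)
    finally have "D (n-1) \<le> bnd_term eps del a (n-1) (n-1)"
      using defect_step[of "n-1"] defect_beyond[of n] r by (simp add: bnd_term_def)
    then show ?case by auto
  next
    case (step r)
    then obtain l where l: "l \<in> {Suc r..n-1}" "D (Suc r) \<le> bnd_term eps del a (Suc r) l"
      by auto
    have r: "1 \<le> r" "r < n" using assms step by auto
    have "((eps r - del r) * a r + D (Suc r)) / (1 + del r) \<le> bnd_term eps del a r l"
      using l params_at[OF r] bnd_term_step[of r l] by (simp add: divide_right_mono)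
    then have "D r \<le> max (bnd_term eps del a r r) (bnd_term eps del a r l)"
      using defect_step[OF r(2)] by (simp add: bnd_term_def)
    then show ?case using l(1) r by (auto simp: max_def split: if_splits)
  qed
qed

end

section \<open>The rescaled matrix\<close>

locale cp_elimination = scaling_params n eps del "\<lambda>k. cmod (ge A k k k)"
  for n :: nat and eps del :: "nat \<Rightarrow> real" and A :: "nat \<Rightarrow> nat \<Rightarrow> complex" +
  assumes growth: "\<forall>k\<in>{1..n-1}. \<forall>i\<in>{k..n}. \<forall>j\<in>{k..n}. (i, j) \<noteq> (k, k) \<longrightarrow>
                     cmod (ge A k i j) \<le> (1 + eps k) * cmod (ge A k k k)"
begin

abbreviation "B \<equiv> rescale_pivots A s"

lemma pivots_nonzero: "\<forall>k\<in>{1..n-1}. ge A k k k \<noteq> 0"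
  using pivots_pos by auto

lemma ge_B:
  assumes "1 \<le> k" "k \<le> i" "k \<le> j"
  shows "ge B k i j = ge A k i j + of_real (pivot_weight s (min i j) i j - 1) * ge A (min i j) i j"
proof -
  have "s m \<noteq> 0" for m using pivot_scale_pos[of m] by simp
  from ge_rescale_pivots[OF this assms] show ?thesis .
qed

lemma ge_B_pivot: "1 \<le> k \<Longrightarrow> ge B k k k = of_real (s k ^ 2) * ge A k k k"
  using ge_B[of k k k] by (simp add: pivot_weight_def power2_eq_square algebra_simps)

lemma ge_B_last: "1 \<le> k \<Longrightarrow> k \<le> n \<Longrightarrow> ge B k n n = ge A k n n"
  using ge_B[of k n n] by (simp add: pivot_weight_def pivot_scale_last)

lemma perturbation_le_defect:
  assumes "1 \<le> min i j" "i \<le> n" "j \<le> n"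
  shows "\<bar>pivot_weight s (min i j) i j - 1\<bar> * cmod (ge A (min i j) i j) \<le> D (min i j)"
proof -
  define r where "r = min i j"
  have r: "1 \<le> r" "r \<le> i" "r \<le> j" "i \<le> n" "j \<le> n" "r = i \<or> r = j"
    using assms by (auto simp: r_def)
  consider "r = n" | "r < n" "i = r" "j = r" | "r < n" "i \<noteq> r \<or> j \<noteq> r"
    using r by linarith
  then have "\<bar>pivot_weight s r i j - 1\<bar> * cmod (ge A r i j) \<le> D r"
  proof cases
    case 1
    then have "i = n" "j = n" using r by auto
    then show ?thesis using 1 by (simp add: pivot_weight_def pivot_scale_last defect_beyond)
  next
    case 2
    have "1 \<le> s r ^ 2" using one_le_pivot_scale[of r] by (simp add: one_le_power)
    then show ?thesis
      using 2 pivot_scale_sq[of r] r(1) by (simp add: pivot_weight_def power2_eq_square)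
  next
    case 3
    then have "pivot_weight s r i j = s r" using r by (auto simp: pivot_weight_def)
    moreover have "cmod (ge A r i j) \<le> (1 + eps r) * cmod (ge A r r r)"
      using growth 3 r by auto
    ultimately show ?thesis
      using pivot_scale_offdiag[of r] one_le_pivot_scale[of r] 3 r(1) by simp
  qed
  then show ?thesis by (simp add: r_def)
qed

lemma ge_B_diff_le_defect:
  assumes "1 \<le> k" "k \<le> i" "k \<le> j" "i \<le> n" "j \<le> n"
  shows "cmod (ge B k i j - ge A k i j) \<le> D (min i j)"
proof -
  have "cmod (ge B k i j - ge A k i j)
      = \<bar>pivot_weight s (min i j) i j - 1\<bar> * cmod (ge A (min i j) i j)"
    using ge_B[OF assms(1-3)] by (simp add: norm_mult del: of_real_diff)
  also have "\<dots> \<le> D (min i j)"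
    using perturbation_le_defect assms by simp
  finally show ?thesis .
qed

lemma defect_le_bnd:
  assumes "1 \<le> min i j" "min i j \<le> n"
  shows "D (min i j) \<le> bnd eps del n A i j"
proof (cases "min i j = n")
  case False
  obtain l where l: "l \<in> {min i j..n-1}"
      "D (min i j) \<le> bnd_term eps del (\<lambda>k. cmod (ge A k k k)) (min i j) l"
    using defect_le_bnd_term[of "min i j"] assms False by auto
  then have "D (min i j) \<le> Max (bnd_term eps del (\<lambda>k. cmod (ge A k k k)) (min i j) ` {min i j..n-1})"
    by (auto intro: order_trans Max_ge)
  then show ?thesis using l(1) by (auto simp: bnd_eq_Max_bnd_term)
next
  case True
  then have "{min i j..n-1} = {}" using assms by auto
  then show ?thesis using True by (simp add: bnd_eq_Max_bnd_term defect_beyond)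
qed

lemma ge_B_growth:
  assumes k: "1 \<le> k" "k < n" and ij: "k \<le> i" "k \<le> j" "i \<le> n" "j \<le> n" "(i, j) \<noteq> (k, k)"
  shows "cmod (ge B k i j) \<le> (1 + del k) * cmod (ge B k k k)"
proof -
  have "cmod (ge B k k k) = s k ^ 2 * cmod (ge A k k k)"
    using ge_B_pivot[OF k(1)] by (simp add: norm_mult norm_power)
  moreover have "cmod (ge B k i j) \<le> (1 + del k) * (s k ^ 2 * cmod (ge A k k k))"
  proof (cases "min i j = k")
    case True
    then have "pivot_weight s (min i j) i j = s k"
      using ij by (auto simp: pivot_weight_def)
    then have "cmod (ge B k i j) = s k * cmod (ge A k i j)"
      using ge_B[OF k(1) ij(1,2)] True pivot_scale_pos[of k] by (simp add: norm_mult algebra_simps)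
    also have "\<dots> \<le> s k * ((1 + eps k) * cmod (ge A k k k))"
      using growth k ij pivot_scale_pos[of k] by (intro mult_left_mono) auto
    also have "\<dots> \<le> s k * ((1 + del k) * s k * cmod (ge A k k k))"
      using pivot_scale_row_bound[OF k] pivot_scale_pos[of k]
      by (intro mult_left_mono mult_right_mono) auto
    finally show ?thesis by (simp add: power2_eq_square algebra_simps)
  next
    case False
    then have "Suc k \<le> min i j" using ij(1,2) by linarith
    have "cmod (ge B k i j) \<le> cmod (ge A k i j) + cmod (ge B k i j - ge A k i j)"
      by (rule norm_triangle_sub)
    also have "\<dots> \<le> (1 + eps k) * cmod (ge A k k k) + D (Suc k)"
    proof (rule add_mono)
      show "cmod (ge A k i j) \<le> (1 + eps k) * cmod (ge A k k k)"
        using growth k ij by auto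
      have "cmod (ge B k i j - ge A k i j) \<le> D (min i j)"
        using ge_B_diff_le_defect k ij by simp
      also have "\<dots> \<le> D (Suc k)"
        using defect_antimono \<open>Suc k \<le> min i j\<close> by simp
      finally show "cmod (ge B k i j - ge A k i j) \<le> D (Suc k)" .
    qed
    also have "\<dots> \<le> (1 + del k) * (s k ^ 2 * cmod (ge A k k k))"
      using pivot_scale_inner_bound[OF k] .
    finally show ?thesis .
  qed
  ultimately show ?thesis by simp
qed

lemma B_pivots_nonzero: "\<forall>k\<in>{1..n-1}. ge B k k k \<noteq> 0"
  using ge_B_pivot pivots_nonzero pivot_scale_pos by (auto simp: less_imp_neq[symmetric])

lemma B_invertible:
  assumes "invertible_n n A"
  shows "invertible_n n B"
proof -
  have "(\<Prod>k=1..n. ge B k k k) = of_real (\<Prod>k=1..n. s k ^ 2) * (\<Prod>k=1..n. ge A k k k)"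
    using ge_B_pivot by (simp add: prod.distrib)
  moreover have "(\<Prod>k=1..n. s k ^ 2) \<noteq> 0"
    using pivot_scale_pos by (simp add: less_imp_neq[symmetric])
  ultimately show ?thesis
    using assms invertible_n_iff_pivots[OF pivots_nonzero] invertible_n_iff_pivots[OF B_pivots_nonzero]
    by simp
qed

lemma CP_B:
  assumes "S = \<real> \<or> S = UNIV" and "CP eps n S A"
  shows "CP del n S B"
proof -
  have "\<forall>i\<in>{1..n}. \<forall>j\<in>{1..n}. B i j \<in> S"
    using assms rescale_pivots_Reals[of n A] by (auto simp: CP_def)
  then show ?thesis
    using assms(2) B_invertible B_pivots_nonzero ge_B_growth by (auto simp: CP_def)
qed

end

theorem mainTheorem3:
  fixes n :: nat and eps del :: "nat \<Rightarrow> real" and S :: "complex set"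
    and A :: "nat \<Rightarrow> nat \<Rightarrow> complex"
  assumes "S = \<real> \<or> S = UNIV"
    and "\<forall>i\<in>{1..n-1}. -1 < del i \<and> del i \<le> 0 \<and> 0 \<le> eps i"
    and "CP eps n S A"
  shows "\<exists>B. CP del n S B \<and>
           (\<forall>k\<in>{1..n}. ge B k n n = ge A k n n) \<and>
           (\<forall>k\<in>{1..n}. \<forall>i\<in>{k..n}. \<forall>j\<in>{k..n}.
              cmod (ge B k i j - ge A k i j) \<le> bnd eps del n A i j)"
proof -
  interpret cp_elimination n eps del A
    using assms(2,3) by unfold_locales (auto simp: CP_def)
  have "cmod (ge B k i j - ge A k i j) \<le> bnd eps del n A i j"
    if "k \<in> {1..n}" "i \<in> {k..n}" "j \<in> {k..n}" for k i j
    using ge_B_diff_le_defect[of k i j] defect_le_bnd[of i j] that by force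
  then show ?thesis
    using CP_B[OF assms(1,3)] ge_B_last by (intro exI[of _ B]) auto
qed

end
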